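(* Let $m,p,q\in(0,\infty)$, let $(u,v)$ be an admissible pair of weights with respect to $(m,p)$, let $w$ be a weight and let $C\in(0,\infty)$. Then the inequality \[ \left(\int_0^\infty w(t)(f^*(t))^q\,dt\right)^{\frac1q}\le C\left(\int_0^\infty v(t)\left(\int_t^\infty u(s)(f^*(s))^m ds\right)^{\frac pm}dt\right)^{\frac1p} \] holds for all $f\in\mathscr M$ if and only if the inequality \[ \left(\int_0^\infty w(t)\left(\int_t^\infty h(y)\,dy\right)^q dt\right)^{\frac1q}\le C\left(\int_0^\infty v(t)\left(\int_t^\infty u(s)\left(\int_s^\infty h(y)\,dy\right)^m ds\right)^{\frac pm}dt\right)^{\frac1p} \] holds for all $h\in\mathscr M_+$.
   Context: $\mathscr M$ is the set of real-valued Lebesgue measurable functions on $\mathbb{R}^n$; for $f\in\mathscr M$, $f^*(t):=\inf\{s\ge0:\ |\{x\in\mathbb{R}^n: |f(x)|>s\}|\le t\}$, $t>0$, is the nonincreasing rearrangement. $\mathscr M_+$ is the cone of nonnegative locally integrable functions on $(0,\infty)$. A weight is a nonnegative measurable function on $(0,\infty)$. For a weight $u$, $U(s,t):=\int_s^t u$; $(u,v)$ is admissible with respect to $(m,p)$ if $0<\left(\int_0^t v(s)U(s,t)^{p/m}ds\right)^{1/p}<\infty$ for all $t\in(0,\infty)$. *)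

theory Defs
  imports "HOL-Analysis.Analysis"
begin

definition epow :: "ennreal \<Rightarrow> real \<Rightarrow> ennreal" where
  "epow x a = (if x = top then top else ennreal (enn2real x powr a))"

definition rearr :: "('a::euclidean_space \<Rightarrow> real) \<Rightarrow> real \<Rightarrow> ennreal" where
  "rearr f t = Inf {s::ennreal. emeasure lebesgue {x. s < ennreal \<bar>f x\<bar>} \<le> ennreal t}"

definition weight :: "(real \<Rightarrow> real) \<Rightarrow> bool" where
  "weight u \<longleftrightarrow> set_borel_measurable lborel {0<..} u \<and> (\<forall>t>0. 0 \<le> u t)"

definition Uint :: "(real \<Rightarrow> real) \<Rightarrow> real \<Rightarrow> real \<Rightarrow> ennreal" where
  "Uint u s t = (\<integral>\<^sup>+ y\<in>{s..t}. ennreal (u y) \<partial>lborel)"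

definition admissible :: "(real \<Rightarrow> real) \<Rightarrow> (real \<Rightarrow> real) \<Rightarrow> real \<Rightarrow> real \<Rightarrow> bool" where
  "admissible u v m p \<longleftrightarrow> (\<forall>t>0.
     0 < epow (\<integral>\<^sup>+ s\<in>{0<..<t}. ennreal (v s) * epow (Uint u s t) (p / m) \<partial>lborel) (1 / p) \<and>
     epow (\<integral>\<^sup>+ s\<in>{0<..<t}. ennreal (v s) * epow (Uint u s t) (p / m) \<partial>lborel) (1 / p) < \<infinity>)"

definition Mplus :: "(real \<Rightarrow> real) set" where
  "Mplus = {h. (\<forall>t>0. 0 \<le> h t) \<and> (\<forall>a b. 0 < a \<longrightarrow> a \<le> b \<longrightarrow> set_integrable lborel {a..b} h)}"

end

theory Submission
  imports Defs
begin

text \<open>Both inequalities evaluate the same two functionals at nonincreasing right-continuous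
  functions on (0,\<infinity>): at rearrangements f* in the first, at tail integrals
  H_h(t) = \<integral> h over (t,\<infinity>) in the second.
  Every tail integral is a rearrangement: it is either identically \<infinity> on (0,\<infinity>) or finite
  there, a finite such H is the rearrangement of the radial function x \<mapsto> H(\<omega>_n |x|^n) on \<real>^n,
  and the constant \<infinity> is the rearrangement of x \<mapsto> \<omega>_n |x|^n itself.
  Conversely, f* is approximated from below by the tail integrals
  H_k(t) = k \<integral> min(f*, k) over (t, t + 1/k], which eventually exceed every x < f*(t);
  the right-hand side is monotone in the function, and Fatou's lemma carries the left-hand
  side to the limit.\<close>

section \<open>Real powers in \<open>[0,\<infinity>]\<close>\<close>

lemma epow_mono: "x \<le> y \<Longrightarrow> 0 < a \<Longrightarrow> epow x a \<le> epow y a"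
  by (cases "y = top") (auto simp: epow_def top_unique less_top intro!: ennreal_leI powr_mono2 enn2real_mono)

lemma epow_epow_inverse: "0 < a \<Longrightarrow> epow (epow x a) (1 / a) = x"
  by (cases "x = top") (simp_all add: epow_def powr_powr ennreal_enn2real less_top[symmetric])

lemma epow_inverse_epow: "0 < a \<Longrightarrow> epow (epow x (1 / a)) a = x"
  using epow_epow_inverse[of "1 / a" x] by simp

lemma epow_approx_from_below:
  assumes "z < epow x a" "0 < a"
  shows "\<exists>y<x. z < epow y a"
proof -
  obtain z' where z': "z < z'" "z' < epow x a" using dense assms(1) by blast
  have "epow z' (1 / a) < x"
    using z'(2) epow_mono[of x "epow z' (1 / a)" a] epow_inverse_epow[OF assms(2)] assms(2)
    by (metis leD leI)
  then show ?thesis using z'(1) epow_inverse_epow[OF assms(2)] by metis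
qed

lemma ennreal_mult_approx_from_below:
  fixes z c b :: ennreal
  assumes "z < c * b"
  shows "\<exists>y<b. z < c * y"
proof -
  have "b \<noteq> 0" "c \<noteq> 0" using assms by auto
  then have "((\<lambda>y. c * y) \<longlongrightarrow> c * b) (at_left b)"
    by (intro tendsto_mult_ennreal tendsto_const tendsto_ident_at) auto
  then have "eventually (\<lambda>y. z < c * y) (at_left b)" using assms by (rule order_tendstoD)
  then obtain b' where "b' < b" "\<forall>y>b'. y < b \<longrightarrow> z < c * y"
    using eventually_at_left[of 0 b] \<open>b \<noteq> 0\<close> by (auto simp: zero_less_iff_neq_zero)
  then show ?thesis using dense by blast
qed

lemma mult_epow_approx_from_below:
  fixes c :: ennreal
  assumes "z < c * epow x a" "0 < a"
  shows "\<exists>y<x. z < c * epow y a"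
proof -
  obtain z' where z': "z' < epow x a" "z < c * z'" using ennreal_mult_approx_from_below[OF assms(1)] by blast
  obtain y where "y < x" "z' < epow y a" using epow_approx_from_below[OF z'(1) assms(2)] by blast
  then show ?thesis using z'(2) by (metis order_less_le_trans less_imp_le mult_left_mono zero_le)
qed

section \<open>Nonincreasing right-continuous functions and rearrangements\<close>

lemma borel_measurable_antimono_ennreal:
  fixes H :: "real \<Rightarrow> ennreal"
  assumes "antimono H"
  shows "H \<in> borel_measurable borel"
proof (rule borel_measurableI_greater)
  fix a
  have "is_interval {x. a < H x}"
    unfolding is_interval_1 using assms by (auto simp: antimono_def intro: order_less_le_trans)
  then show "{x \<in> space borel. a < H x} \<in> sets borel"
    using real_interval_borel_measurable by simp
qed

text \<open>For antimonotone \<open>H\<close> the second clause is right continuity on \<open>(0,\<infinity>)\<close>.\<close>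

definition right_cont_antimono :: "(real \<Rightarrow> ennreal) \<Rightarrow> bool" where
  "right_cont_antimono H \<longleftrightarrow> antimono H \<and> (\<forall>t>0. \<forall>x. x < H t \<longrightarrow> (\<exists>r>t. x < H r))"

lemma antimono_rearr: "antimono (rearr f)"
  unfolding rearr_def by (intro antimonoI Inf_superset_mono) (auto intro: order_trans ennreal_leI)

lemma sets_lebesgue_less_abs:
  assumes "f \<in> borel_measurable lebesgue"
  shows "{x. s < ennreal \<bar>f x\<bar>} \<in> sets lebesgue"
proof -
  have "Measurable.pred lebesgue (\<lambda>x. s < ennreal \<bar>f x\<bar>)" using assms by measurable
  then show ?thesis by (simp add: pred_def)
qed

lemma rearr_less_imp_emeasure_le:
  assumes "rearr f r < s" "f \<in> borel_measurable lebesgue"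
  shows "emeasure lebesgue {x. s < ennreal \<bar>f x\<bar>} \<le> ennreal r"
proof -
  obtain s' where s': "emeasure lebesgue {x. s' < ennreal \<bar>f x\<bar>} \<le> ennreal r" "s' < s"
    using assms(1) unfolding rearr_def Inf_less_iff by blast
  have "emeasure lebesgue {x. s < ennreal \<bar>f x\<bar>} \<le> emeasure lebesgue {x. s' < ennreal \<bar>f x\<bar>}"
    using s'(2) assms(2) by (intro emeasure_mono sets_lebesgue_less_abs) (auto dest: order.strict_trans)
  then show ?thesis using s'(1) by order
qed

lemma right_cont_antimono_rearr:
  assumes "f \<in> borel_measurable lebesgue"
  shows "right_cont_antimono (rearr f)"
  unfolding right_cont_antimono_def
proof (intro conjI antimono_rearr allI impI)
  fix t x assume "0 < t" "x < rearr f t"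
  show "\<exists>r>t. x < rearr f r"
  proof (rule ccontr)
    assume "\<not> (\<exists>r>t. x < rearr f r)"
    then have "rearr f r \<le> x" if "r > t" for r using that by force
    have "rearr f t \<le> x'" if "x < x'" for x'
    proof -
      have le_r: "emeasure lebesgue {y. x' < ennreal \<bar>f y\<bar>} \<le> ennreal r" if "r > t" for r
        using \<open>\<And>r. r > t \<Longrightarrow> rearr f r \<le> x\<close>[OF that] \<open>x < x'\<close> assms
        by (intro rearr_less_imp_emeasure_le) auto
      have "emeasure lebesgue {y. x' < ennreal \<bar>f y\<bar>} \<le> ennreal t"
      proof (rule ennreal_le_epsilon)
        fix e :: real assume "0 < e"
        then show "emeasure lebesgue {y. x' < ennreal \<bar>f y\<bar>} \<le> ennreal t + ennreal e"
          using le_r[of "t + e"] \<open>0 < t\<close> by (simp add: ennreal_plus)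
      qed
      then show ?thesis unfolding rearr_def by (intro Inf_lower) simp
    qed
    then have "rearr f t \<le> x" by (rule dense_ge)
    then show False using \<open>x < rearr f t\<close> by simp
  qed
qed

section \<open>Tail integrals\<close>

definition tail_integral :: "(real \<Rightarrow> real) \<Rightarrow> real \<Rightarrow> ennreal" where
  "tail_integral h t = (\<integral>\<^sup>+ y\<in>{t<..}. ennreal (h y) \<partial>lborel)"

lemma Mplus_borel_measurable:
  assumes "h \<in> Mplus"
  shows "(\<lambda>y. ennreal (h y) * indicator {0<..} y) \<in> borel_measurable borel"
proof -
  define A where "A n = {..0} \<union> {1 / real (Suc n) .. real (Suc n)}" for n
  have "y \<in> (\<Union>n. A n)" for y :: real
  proof -
    obtain n1 where "inverse (real (Suc n1)) < y" if "0 < y"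
      using reals_Archimedean by blast
    moreover obtain n2 where "y < real n2" using reals_Archimedean2 by blast
    moreover have "inverse (real (Suc (max n1 n2))) \<le> inverse (real (Suc n1))"
      by (intro le_imp_inverse_le) auto
    ultimately have "0 < y \<Longrightarrow> 1 / real (Suc (max n1 n2)) \<le> y" "y \<le> real (Suc (max n1 n2))"
      by (auto simp only: inverse_eq_divide) (auto simp del: of_nat_Suc)
    then have "y \<in> A (max n1 n2)"
      unfolding A_def by (cases "0 < y") auto
    then show ?thesis by blast
  qed
  then have cover: "space borel = (\<Union>n. A n)" by auto
  have "(\<lambda>y. indicator {0<..} y *\<^sub>R h y :: real) \<in> borel_measurable borel"
  proof (rule measurable_piecewise_restrict2[of A])
    fix n
    have bounds: "0 < 1 / real (Suc n)" "1 / real (Suc n) \<le> real (Suc n)"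
      by (auto simp: field_simps)
    then have "set_integrable lborel {1 / real (Suc n) .. real (Suc n)} h"
      using assms unfolding Mplus_def by blast
    then have "(\<lambda>y. indicator {1 / real (Suc n) .. real (Suc n)} y *\<^sub>R h y) \<in> borel_measurable borel"
      unfolding set_integrable_def by (simp add: borel_measurable_integrable)
    moreover have "\<forall>y\<in>A n.
        indicator {0<..} y *\<^sub>R h y = indicator {1 / real (Suc n) .. real (Suc n)} y *\<^sub>R h y"
      using order.strict_trans2[OF bounds(1)] unfolding A_def by (auto simp: indicator_def)
    ultimately show "\<exists>g\<in>borel_measurable borel. \<forall>y\<in>A n. indicator {0<..} y *\<^sub>R h y = g y"
      by (intro bexI[of _ "\<lambda>y. indicator {1 / real (Suc n) .. real (Suc n)} y *\<^sub>R h y"])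
  qed (fact cover | simp add: A_def)+
  moreover have "ennreal (h y) * indicator {0<..} y = ennreal (indicator {0<..} y *\<^sub>R h y)" for y
    using assms unfolding Mplus_def by (auto simp: indicator_def)
  ultimately show ?thesis by simp
qed

lemma Mplus_set_nn_integral_eq_emeasure:
  assumes "h \<in> Mplus" "A \<in> sets borel" "A \<subseteq> {0<..}"
  shows "(\<integral>\<^sup>+ y\<in>A. ennreal (h y) \<partial>lborel)
    = emeasure (density lborel (\<lambda>y. ennreal (h y) * indicator {0<..} y)) A"
  using assms Mplus_borel_measurable[OF assms(1)]
  by (subst emeasure_density) (auto intro!: nn_integral_cong simp: indicator_def)

lemma antimono_tail_integral: "antimono (tail_integral h)"
  unfolding antimono_def tail_integral_def by (auto intro!: nn_integral_mono simp: indicator_def)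

lemma tail_integral_eq_emeasure:
  assumes "h \<in> Mplus" "0 \<le> t"
  shows "tail_integral h t = emeasure (density lborel (\<lambda>y. ennreal (h y) * indicator {0<..} y)) {t<..}"
  unfolding tail_integral_def using assms by (intro Mplus_set_nn_integral_eq_emeasure) auto

lemma UN_greaterThan_plus_inverse: "(\<Union>n. {t + 1 / real (Suc n)<..}) = {t::real<..}"
proof (intro equalityI subsetI)
  fix y assume "y \<in> (\<Union>n. {t + 1 / real (Suc n)<..})"
  then obtain n where "t + 1 / real (Suc n) < y" by blast
  moreover have "0 < 1 / real (Suc n)" by simp
  ultimately have "t < y" by linarith
  then show "y \<in> {t<..}" by simp
next
  fix y assume "y \<in> {t<..}"
  then obtain n where "inverse (real (Suc n)) < y - t" using reals_Archimedean[of "y - t"] by auto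
  then show "y \<in> (\<Union>n. {t + 1 / real (Suc n)<..})" by (auto simp: inverse_eq_divide less_diff_eq add.commute)
qed

lemma right_cont_antimono_tail_integral:
  assumes "h \<in> Mplus"
  shows "right_cont_antimono (tail_integral h)"
  unfolding right_cont_antimono_def
proof (intro conjI antimono_tail_integral allI impI)
  fix t x assume "0 < t" "x < tail_integral h t"
  define \<nu> where "\<nu> = density lborel (\<lambda>y. ennreal (h y) * indicator {0<..} y)"
  define A where "A n = {t + 1 / real (Suc n)<..}" for n
  have tail_eq: "tail_integral h r = emeasure \<nu> {r<..}" if "0 \<le> r" for r
    unfolding \<nu>_def using assms that by (rule tail_integral_eq_emeasure)
  have "incseq A"
    unfolding A_def by (intro monoI) (auto simp: frac_le)
  moreover have "(\<Union>n. A n) = {t<..}" unfolding A_def by (rule UN_greaterThan_plus_inverse)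
  ultimately have "(SUP n. emeasure \<nu> (A n)) = emeasure \<nu> {t<..}"
    by (subst SUP_emeasure_incseq) (auto simp: A_def \<nu>_def)
  then have "x < (SUP n. emeasure \<nu> (A n))"
    using \<open>x < tail_integral h t\<close> tail_eq \<open>0 < t\<close> by simp
  then obtain n where "x < emeasure \<nu> (A n)" by (auto simp: less_SUP_iff)
  then have "x < tail_integral h (t + 1 / real (Suc n))"
    using tail_eq \<open>0 < t\<close> unfolding A_def by simp
  then show "\<exists>r>t. x < tail_integral h r" by (intro exI[of _ "t + 1 / real (Suc n)"]) auto
qed

lemma tail_integral_infinite_or_finite:
  assumes "h \<in> Mplus"
  shows "(\<forall>t>0. tail_integral h t = top) \<or> (\<forall>t>0. tail_integral h t < top)"
proof (cases "\<exists>t0>0. tail_integral h t0 = top")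
  case False
  then show ?thesis by (auto simp: less_top)
next
  case True
  then obtain t0 where t0: "0 < t0" "tail_integral h t0 = top" by blast
  define \<nu> where "\<nu> = density lborel (\<lambda>y. ennreal (h y) * indicator {0<..} y)"
  have "tail_integral h t = top" if "t0 < t" for t
  proof -
    have "set_integrable lborel {t0..t} h" using assms t0 that unfolding Mplus_def by auto
    then have "(\<integral>\<^sup>+ y. ennreal (norm (indicator {t0..t} y *\<^sub>R h y)) \<partial>lborel) < top"
      unfolding set_integrable_def integrable_iff_bounded by simp
    moreover have "emeasure \<nu> {t0<..t} = (\<integral>\<^sup>+ y\<in>{t0<..t}. ennreal (h y) \<partial>lborel)"
      unfolding \<nu>_def using assms t0 by (intro Mplus_set_nn_integral_eq_emeasure[symmetric]) auto
    moreover have "\<dots> \<le> (\<integral>\<^sup>+ y. ennreal (norm (indicator {t0..t} y *\<^sub>R h y)) \<partial>lborel)"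
      by (intro nn_integral_mono) (auto simp: indicator_def intro: ennreal_leI)
    ultimately have finite: "emeasure \<nu> {t0<..t} \<noteq> top" by (metis linorder_not_le top_unique)
    have "top = emeasure \<nu> {t0<..}"
      using t0 tail_integral_eq_emeasure[OF assms, of t0] unfolding \<nu>_def by simp
    also have "{t0<..} = {t0<..t} \<union> {t<..}" using that by auto
    also have "emeasure \<nu> \<dots> = emeasure \<nu> {t0<..t} + emeasure \<nu> {t<..}"
      by (intro plus_emeasure[symmetric]) (auto simp: \<nu>_def)
    finally have "emeasure \<nu> {t<..} = top" using finite by (metis ennreal_add_eq_top)
    then show ?thesis
      using t0 that tail_integral_eq_emeasure[OF assms, of t] unfolding \<nu>_def by simp
  qed
  then have "tail_integral h t = top" if "0 < t" for t
    using antimono_tail_integral[of h] t0 that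
    by (cases "t \<le> t0") (auto dest: antimonoD simp: top_unique)
  then show ?thesis by blast
qed

section \<open>Tail integrals are rearrangements\<close>

text \<open>Its sublevel set below \<open>r\<close> has measure \<open>r\<close>,
  so composing a nonincreasing \<open>H\<close> with it yields a function with rearrangement \<open>H\<close>.\<close>

definition norm_volume :: "'a::euclidean_space \<Rightarrow> real" where
  "norm_volume x = unit_ball_vol (real DIM('a)) * norm x ^ DIM('a)"

lemma borel_measurable_norm_volume [measurable]: "norm_volume \<in> borel_measurable borel"
  unfolding norm_volume_def by measurable

lemma lebesgue_measurable_norm_volume: "norm_volume \<in> borel_measurable lebesgue"
  by (intro measurable_completion) simp

lemma norm_volume_nonneg: "0 \<le> norm_volume x"
  unfolding norm_volume_def by simp

lemma sets_lebesgue_norm_volume_less: "{x::'a::euclidean_space. norm_volume x < r} \<in> sets lebesgue"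
proof -
  have "Measurable.pred lebesgue (\<lambda>x. norm_volume x < r)"
    using lebesgue_measurable_norm_volume by measurable
  then show ?thesis by (simp add: pred_def)
qed

lemma emeasure_norm_volume_less:
  assumes "0 \<le> r"
  shows "emeasure lborel {x::'a::euclidean_space. norm_volume x < r} = ennreal r"
proof -
  define n where "n = DIM('a)"
  define c where "c = unit_ball_vol (real n)"
  have "0 < n" "0 < c" unfolding n_def c_def by simp_all
  define R where "R = root n (r / c)"
  have "0 \<le> R" unfolding R_def using assms \<open>0 < c\<close> by (simp add: real_root_ge_zero)
  have "{x::'a. norm_volume x < r} = ball 0 R"
  proof (intro set_eqI)
    fix x :: 'a
    have "norm_volume x < r \<longleftrightarrow> norm x ^ n < r / c"
      unfolding norm_volume_def c_def[symmetric] n_def[symmetric] using \<open>0 < c\<close>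
      by (simp add: less_divide_eq mult.commute)
    also have "\<dots> \<longleftrightarrow> root n (norm x ^ n) < R"
      unfolding R_def using \<open>0 < n\<close> by simp
    also have "root n (norm x ^ n) = norm x" using \<open>0 < n\<close> by (simp add: real_root_power_cancel)
    finally show "x \<in> {x. norm_volume x < r} \<longleftrightarrow> x \<in> ball 0 R" by simp
  qed
  moreover have "emeasure lborel (ball (0::'a) R) = ennreal (c * R ^ n)"
    unfolding c_def n_def using emeasure_ball[of R "0::'a"] \<open>0 \<le> R\<close> by simp
  moreover have "c * R ^ n = r" unfolding R_def using \<open>0 < n\<close> \<open>0 < c\<close> assms by simp
  ultimately show ?thesis by simp
qed

lemma rearr_norm_volume:
  assumes "0 < t"
  shows "rearr (norm_volume :: 'a::euclidean_space \<Rightarrow> real) t = top"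
  unfolding rearr_def
proof (rule Inf_eqI, rule ccontr)
  fix s assume s: "s \<in> {s. emeasure lebesgue {x::'a. s < ennreal \<bar>norm_volume x\<bar>} \<le> ennreal t}"
  assume "\<not> top \<le> s"
  then obtain s0 where s0: "s = ennreal s0" "0 \<le> s0" by (cases s rule: ennreal_cases) auto
  let ?big = "{x::'a. norm_volume x < s0 + t + 1}" and ?small = "{x::'a. norm_volume x < s0 + 1/2}"
  have "?big \<subseteq> ?small \<union> {x::'a. s < ennreal \<bar>norm_volume x\<bar>}"
    using s0 norm_volume_nonneg by (auto simp: ennreal_less_iff)
  then have "emeasure lebesgue ?big \<le> emeasure lebesgue (?small \<union> {x::'a. s < ennreal \<bar>norm_volume x\<bar>})"
    by (intro emeasure_mono sets.Un sets_lebesgue_norm_volume_less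
        sets_lebesgue_less_abs lebesgue_measurable_norm_volume)
  also have "\<dots> \<le> emeasure lebesgue ?small + emeasure lebesgue {x::'a. s < ennreal \<bar>norm_volume x\<bar>}"
    by (rule emeasure_subadditive) (intro sets_lebesgue_norm_volume_less
        sets_lebesgue_less_abs lebesgue_measurable_norm_volume)+
  also have "\<dots> \<le> ennreal (s0 + 1/2) + ennreal t"
    using s s0 by (intro add_mono) (simp_all add: emeasure_norm_volume_less)
  finally have "ennreal (s0 + t + 1) \<le> ennreal (s0 + 1/2 + t)"
    using s0 assms by (simp add: emeasure_norm_volume_less ennreal_plus)
  then have "s0 + t + 1 \<le> s0 + 1/2 + t" using s0 assms by (subst (asm) ennreal_le_iff) auto
  then show False by simp
qed auto

lemma lebesgue_measurable_comp_norm_volume: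
  assumes "antimono H"
  shows "(\<lambda>x. enn2real (H (norm_volume x))) \<in> borel_measurable lebesgue"
proof -
  have [measurable]: "H \<in> borel_measurable borel" using assms by (rule borel_measurable_antimono_ennreal)
  show ?thesis using lebesgue_measurable_norm_volume by measurable
qed

lemma emeasure_comp_norm_volume_le:
  assumes "antimono H" "\<forall>t>0. H t < top" "0 < t"
  shows "emeasure lebesgue {x::'a::euclidean_space. H t < ennreal \<bar>enn2real (H (norm_volume x))\<bar>}
    \<le> ennreal t"
proof -
  have "{x::'a. H t < ennreal \<bar>enn2real (H (norm_volume x))\<bar>} \<subseteq> {x. norm_volume x < t}"
  proof (rule subsetI, rule CollectI, rule ccontr)
    fix x assume x: "x \<in> {x. H t < ennreal \<bar>enn2real (H (norm_volume x))\<bar>}" "\<not> norm_volume x < t"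
    then have "ennreal \<bar>enn2real (H (norm_volume x))\<bar> = H (norm_volume x)" "H (norm_volume x) \<le> H t"
      using assms antimonoD[OF assms(1), of t "norm_volume x"]
      by (simp_all add: ennreal_enn2real less_top[symmetric])
    then show False using x by simp
  qed
  then have "emeasure lebesgue {x::'a. H t < ennreal \<bar>enn2real (H (norm_volume x))\<bar>}
      \<le> emeasure lebesgue {x::'a. norm_volume x < t}"
    by (rule emeasure_mono[OF _ sets_lebesgue_norm_volume_less])
  also have "\<dots> = ennreal t" using \<open>0 < t\<close> by (simp add: emeasure_norm_volume_less)
  finally show ?thesis .
qed

lemma emeasure_comp_norm_volume_ge:
  assumes "antimono H" "\<forall>t>0. H t < top" "0 < r" "s < H r"
  shows "ennreal r
    \<le> emeasure lebesgue {x::'a::euclidean_space. s < ennreal \<bar>enn2real (H (norm_volume x))\<bar>}"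
proof (rule ennreal_le_epsilon)
  fix e :: real assume "0 < e"
  let ?A = "{x::'a. s < ennreal \<bar>enn2real (H (norm_volume x))\<bar>}"
  have A: "?A \<in> sets lebesgue"
    by (intro sets_lebesgue_less_abs lebesgue_measurable_comp_norm_volume assms(1))
  have "{x::'a. norm_volume x < r} \<subseteq> ?A \<union> {x. norm_volume x < e}"
  proof (intro subsetI UnCI CollectI)
    fix x assume x: "x \<in> {x::'a. norm_volume x < r}" "x \<notin> {x::'a. norm_volume x < e}"
    then have "ennreal \<bar>enn2real (H (norm_volume x))\<bar> = H (norm_volume x)" "H r \<le> H (norm_volume x)"
      using assms \<open>0 < e\<close> antimonoD[OF assms(1), of "norm_volume x" r]
      by (simp_all add: ennreal_enn2real less_top[symmetric])
    then show "s < ennreal \<bar>enn2real (H (norm_volume x))\<bar>" using assms(4) by simp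
  qed
  then have "emeasure lebesgue {x::'a. norm_volume x < r} \<le> emeasure lebesgue (?A \<union> {x. norm_volume x < e})"
    by (intro emeasure_mono sets.Un A sets_lebesgue_norm_volume_less)
  then have "ennreal r \<le> emeasure lebesgue (?A \<union> {x. norm_volume x < e})"
    using assms(3) by (simp add: emeasure_norm_volume_less)
  also have "\<dots> \<le> emeasure lebesgue ?A + emeasure lebesgue {x::'a. norm_volume x < e}"
    by (rule emeasure_subadditive) (intro A sets_lebesgue_norm_volume_less)+
  also have "\<dots> = emeasure lebesgue ?A + ennreal e"
    using \<open>0 < e\<close> by (simp add: emeasure_norm_volume_less)
  finally show "ennreal r \<le> emeasure lebesgue ?A + ennreal e" .
qed

lemma rearr_comp_norm_volume:
  assumes H: "right_cont_antimono H" and finite: "\<forall>t>0. H t < top" and "0 < t"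
  shows "rearr (\<lambda>x::'a::euclidean_space. enn2real (H (norm_volume x))) t = H t"
  unfolding rearr_def
proof (rule antisym)
  have anti: "antimono H" using H unfolding right_cont_antimono_def by simp
  show "Inf {s. emeasure lebesgue {x::'a. s < ennreal \<bar>enn2real (H (norm_volume x))\<bar>} \<le> ennreal t} \<le> H t"
    using emeasure_comp_norm_volume_le[OF anti finite \<open>0 < t\<close>] by (intro Inf_lower) simp
  show "H t \<le> Inf {s. emeasure lebesgue {x::'a. s < ennreal \<bar>enn2real (H (norm_volume x))\<bar>} \<le> ennreal t}"
  proof (rule Inf_greatest, rule ccontr)
    fix s assume s: "s \<in> {s. emeasure lebesgue {x::'a. s < ennreal \<bar>enn2real (H (norm_volume x))\<bar>} \<le> ennreal t}"
    assume "\<not> H t \<le> s"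
    then obtain r where r: "r > t" "s < H r"
      using H \<open>0 < t\<close> unfolding right_cont_antimono_def by (auto simp: not_le)
    have "ennreal r \<le> emeasure lebesgue {x::'a. s < ennreal \<bar>enn2real (H (norm_volume x))\<bar>}"
      using r \<open>0 < t\<close> by (intro emeasure_comp_norm_volume_ge[OF anti finite]) auto
    also have "\<dots> \<le> ennreal t" using s by simp
    finally show False using r \<open>0 < t\<close> by (simp add: ennreal_le_iff)
  qed
qed

lemma right_cont_antimono_is_rearr:
  assumes "right_cont_antimono H" "(\<forall>t>0. H t = top) \<or> (\<forall>t>0. H t < top)"
  shows "\<exists>f::'a::euclidean_space \<Rightarrow> real. f \<in> borel_measurable lebesgue \<and> (\<forall>t>0. rearr f t = H t)"
  using assms(2)
proof
  assume "\<forall>t>0. H t = top"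
  then show ?thesis using rearr_norm_volume lebesgue_measurable_norm_volume by metis
next
  assume "\<forall>t>0. H t < top"
  moreover have "antimono H" using assms(1) unfolding right_cont_antimono_def by simp
  ultimately show ?thesis
    using rearr_comp_norm_volume[OF assms(1)] lebesgue_measurable_comp_norm_volume by blast
qed

section \<open>Rearrangements are limits of tail integrals\<close>

lemma nn_integral_tail_telescope:
  fixes g :: "real \<Rightarrow> real"
  assumes [measurable]: "g \<in> borel_measurable borel"
    and "0 \<le> d" "\<And>y. 0 \<le> g y" "\<And>y. t < y \<Longrightarrow> g (y + d) \<le> g y"
    and finite: "(\<integral>\<^sup>+ y\<in>{t + d<..}. ennreal (g y) \<partial>lborel) \<noteq> top"
  shows "(\<integral>\<^sup>+ y\<in>{t<..}. ennreal (g y - g (y + d)) \<partial>lborel)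
    = (\<integral>\<^sup>+ y\<in>{t<..t + d}. ennreal (g y) \<partial>lborel)"
proof -
  let ?I = "\<lambda>A. \<integral>\<^sup>+ y\<in>A. ennreal (g y) \<partial>lborel"
  have "?I {t<..} = (\<integral>\<^sup>+ y. ennreal (g y - g (y + d)) * indicator {t<..} y
                                + ennreal (g (y + d)) * indicator {t<..} y \<partial>lborel)"
    using assms(3,4) by (intro nn_integral_cong) (auto simp: indicator_def simp flip: ennreal_plus)
  also have "\<dots> = (\<integral>\<^sup>+ y\<in>{t<..}. ennreal (g y - g (y + d)) \<partial>lborel)
                  + (\<integral>\<^sup>+ y\<in>{t<..}. ennreal (g (y + d)) \<partial>lborel)"
    by (rule nn_integral_add) auto
  also have "(\<integral>\<^sup>+ y\<in>{t<..}. ennreal (g (y + d)) \<partial>lborel)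
      = (\<integral>\<^sup>+ y. ennreal (g (d + 1 * y)) * indicator {t + d<..} (d + 1 * y) \<partial>lborel)"
    by (intro nn_integral_cong) (auto simp: indicator_def add.commute)
  also have "\<dots> = ?I {t + d<..}"
    using nn_integral_real_affine[of "\<lambda>y. ennreal (g y) * indicator {t + d<..} y" 1 d] by simp
  finally have split_difference:
    "?I {t<..} = (\<integral>\<^sup>+ y\<in>{t<..}. ennreal (g y - g (y + d)) \<partial>lborel) + ?I {t + d<..}" .
  have "?I {t<..} = (\<integral>\<^sup>+ y. ennreal (g y) * indicator {t<..t + d} y
                                + ennreal (g y) * indicator {t + d<..} y \<partial>lborel)"
    using assms(2) by (intro nn_integral_cong) (auto simp: indicator_def)
  also have "\<dots> = ?I {t<..t + d} + ?I {t + d<..}"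
    by (rule nn_integral_add) auto
  finally have "?I {t + d<..} + (\<integral>\<^sup>+ y\<in>{t<..}. ennreal (g y - g (y + d)) \<partial>lborel)
      = ?I {t + d<..} + ?I {t<..t + d}"
    unfolding split_difference by (simp only: add.commute)
  then show ?thesis using finite by (simp add: ennreal_add_left_cancel)
qed

text \<open>With g_k = min(\<phi>, k) on (0,k), the density k (g_k - g_k(\<cdot> + 1/k)) telescopes: its tail
  integral at t is the average of g_k over (t, t + 1/k].\<close>

definition truncation :: "(real \<Rightarrow> ennreal) \<Rightarrow> nat \<Rightarrow> real \<Rightarrow> real" where
  "truncation \<phi> k y = (if 0 < y \<and> y < real k then enn2real (min (\<phi> y) (of_nat k)) else 0)"

definition difference_density :: "(real \<Rightarrow> ennreal) \<Rightarrow> nat \<Rightarrow> real \<Rightarrow> real" where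
  "difference_density \<phi> k y = real k * truncation \<phi> k y - real k * truncation \<phi> k (y + 1 / real k)"

lemma truncation_nonneg: "0 \<le> truncation \<phi> k y"
  by (simp add: truncation_def)

lemma ennreal_truncation:
  "ennreal (truncation \<phi> k y) = (if 0 < y \<and> y < real k then min (\<phi> y) (of_nat k) else 0)"
proof -
  have "min (\<phi> y) (of_nat k) < top"
    by (metis min.strict_coboundedI2 of_nat_less_top)
  then show ?thesis unfolding truncation_def by (simp add: ennreal_enn2real less_top[symmetric])
qed

lemma truncation_le: "truncation \<phi> k y \<le> real k"
proof -
  have "ennreal (truncation \<phi> k y) \<le> of_nat k" unfolding ennreal_truncation by auto
  then show ?thesis by (simp add: ennreal_of_nat_eq_real_of_nat ennreal_le_iff)
qed

lemma truncation_antimono: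
  assumes "antimono \<phi>" "0 < y" "y \<le> y'"
  shows "truncation \<phi> k y' \<le> truncation \<phi> k y"
proof -
  have "ennreal (truncation \<phi> k y') \<le> ennreal (truncation \<phi> k y)"
    using assms antimonoD[OF assms(1) assms(3)] unfolding ennreal_truncation
    by (auto intro: min.coboundedI1 min.coboundedI2)
  then show ?thesis using truncation_nonneg[of \<phi> k y] by (simp add: ennreal_le_iff)
qed

lemma borel_measurable_truncation:
  assumes "antimono \<phi>"
  shows "truncation \<phi> k \<in> borel_measurable borel"
proof -
  have [measurable]: "\<phi> \<in> borel_measurable borel" using assms by (rule borel_measurable_antimono_ennreal)
  show ?thesis unfolding truncation_def[abs_def] by measurable
qed

lemma integrable_truncation:
  assumes "antimono \<phi>"
  shows "integrable lborel (truncation \<phi> k)"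
proof (rule Bochner_Integration.integrable_bound)
  show "integrable lborel (\<lambda>y. real k * indicator {0<..<real k} y :: real)"
    by (intro Bochner_Integration.integrable_mult_right integrable_real_indicator) auto
  show "truncation \<phi> k \<in> borel_measurable lborel"
    using borel_measurable_truncation[OF assms] by simp
  show "AE y in lborel. norm (truncation \<phi> k y) \<le> norm (real k * indicator {0<..<real k} y :: real)"
  proof (rule AE_I2)
    fix y
    show "norm (truncation \<phi> k y) \<le> norm (real k * indicator {0<..<real k} y :: real)"
      using truncation_le[of \<phi> k y] truncation_nonneg[of \<phi> k y]
      by (cases "0 < y \<and> y < real k") (auto simp: truncation_def indicator_def)
  qed
qed

lemma integrable_difference_density:
  assumes "antimono \<phi>"
  shows "integrable lborel (difference_density \<phi> k)"
proof -
  have "integrable lborel (\<lambda>y. truncation \<phi> k (1 / real k + 1 * y))"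
    by (rule lborel_integrable_real_affine[OF integrable_truncation[OF assms]]) simp
  then show ?thesis
    unfolding difference_density_def[abs_def]
    by (intro Bochner_Integration.integrable_diff Bochner_Integration.integrable_mult_right
        integrable_truncation[OF assms]) (simp add: add.commute)
qed

lemma difference_density_Mplus:
  assumes "antimono \<phi>"
  shows "difference_density \<phi> k \<in> Mplus"
  unfolding Mplus_def
proof safe
  fix t :: real assume "0 < t"
  then show "0 \<le> difference_density \<phi> k t"
    unfolding difference_density_def
    by (intro mult_left_mono truncation_antimono[OF assms] diff_ge_0_iff_ge[THEN iffD2]) auto
next
  fix a b :: real
  show "set_integrable lborel {a..b} (difference_density \<phi> k)"
    unfolding set_integrable_def
    by (intro integrable_mult_indicator integrable_difference_density[OF assms]) auto
qed

lemma tail_integral_difference_density: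
  assumes "antimono \<phi>" "0 < k" "0 < t"
  shows "tail_integral (difference_density \<phi> k) t
    = (\<integral>\<^sup>+ y\<in>{t<..t + 1 / real k}. ennreal (real k * truncation \<phi> k y) \<partial>lborel)"
  unfolding tail_integral_def difference_density_def
proof (rule nn_integral_tail_telescope)
  let ?g = "\<lambda>y. real k * truncation \<phi> k y"
  show "?g \<in> borel_measurable borel" using borel_measurable_truncation[OF assms(1)] by measurable
  show "?g (y + 1 / real k) \<le> ?g y" if "t < y" for y
    using that assms by (intro mult_left_mono truncation_antimono) auto
  have "integrable lborel ?g"
    using integrable_truncation[OF assms(1)] by (rule Bochner_Integration.integrable_mult_right)
  then have "(\<integral>\<^sup>+ y. ennreal (?g y) \<partial>lborel) \<noteq> top" by (metis integrableD(2) infinity_ennreal_def)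
  moreover have "(\<integral>\<^sup>+ y\<in>{t + 1 / real k<..}. ennreal (?g y) \<partial>lborel)
      \<le> (\<integral>\<^sup>+ y. ennreal (?g y) \<partial>lborel)"
    by (intro nn_integral_mono) (auto simp: indicator_def)
  ultimately show "(\<integral>\<^sup>+ y\<in>{t + 1 / real k<..}. ennreal (?g y) \<partial>lborel) \<noteq> top"
    by (rule neq_top_trans)
qed (auto simp: truncation_nonneg)

lemma tail_integral_difference_density_le:
  assumes "antimono \<phi>" "0 < t"
  shows "tail_integral (difference_density \<phi> k) t \<le> \<phi> t"
proof (cases "k = 0")
  case True
  then show ?thesis by (simp add: tail_integral_def difference_density_def)
next
  case False
  let ?J = "{t<..t + 1 / real k}"
  have "tail_integral (difference_density \<phi> k) t = (\<integral>\<^sup>+ y\<in>?J. ennreal (real k * truncation \<phi> k y) \<partial>lborel)"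
    using False assms by (intro tail_integral_difference_density) auto
  also have "\<dots> \<le> (\<integral>\<^sup>+ y. (of_nat k * \<phi> t) * indicator ?J y \<partial>lborel)"
  proof (intro nn_integral_mono)
    fix y
    have "ennreal (real k * truncation \<phi> k y) = of_nat k * ennreal (truncation \<phi> k y)"
      using truncation_nonneg by (simp add: ennreal_mult ennreal_of_nat_eq_real_of_nat)
    also have "\<dots> \<le> of_nat k * \<phi> t" if "y \<in> ?J"
      using that antimonoD[OF assms(1), of t y] unfolding ennreal_truncation
      by (intro mult_left_mono) (auto intro: min.coboundedI1)
    finally show "ennreal (real k * truncation \<phi> k y) * indicator ?J y \<le> (of_nat k * \<phi> t) * indicator ?J y"
      by (simp add: indicator_def)
  qed
  also have "\<dots> = of_nat k * \<phi> t * emeasure lborel ?J"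
    by (rule nn_integral_cmult_indicator) simp
  also have "\<dots> = \<phi> t * (ennreal (real k) * ennreal (1 / real k))"
    by (simp add: ennreal_of_nat_eq_real_of_nat mult_ac)
  also have "ennreal (real k) * ennreal (1 / real k) = 1"
    using False by (simp flip: ennreal_mult)
  finally show ?thesis by simp
qed

lemma eventually_less_tail_integral_difference_density:
  assumes \<phi>: "right_cont_antimono \<phi>" and "0 < t" "x < \<phi> t"
  shows "eventually (\<lambda>k. x < tail_integral (difference_density \<phi> k) t) sequentially"
proof -
  have anti: "antimono \<phi>" using \<phi> unfolding right_cont_antimono_def by simp
  obtain r where r: "t < r" "x < \<phi> r"
    using \<phi> assms unfolding right_cont_antimono_def by blast
  obtain x' where x': "x < x'" "x' < \<phi> r" using dense r(2) by blast
  then obtain x0 where x0: "x' = ennreal x0" "0 \<le> x0"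
    by (cases x' rule: ennreal_cases) auto
  obtain N :: nat where N: "x0 + 1 / (r - t) + t + 1 < real N" using reals_Archimedean2 by blast
  have "x < tail_integral (difference_density \<phi> k) t" if "N \<le> k" for k
  proof -
    let ?J = "{t<..t + 1 / real k}"
    have "0 < 1 / (r - t)" using r by simp
    then have k: "x0 < real k" "1 / (r - t) < real k" "t + 1 < real k"
      using N x0(2) \<open>0 < t\<close> that by (smt (verit, best) of_nat_le_iff)+
    then have "0 < k" "1 / real k < r - t" "1 / real k < 1"
      using r(1) \<open>0 < t\<close> by (auto simp: divide_less_eq mult.commute)
    have "ennreal (real k * x0) \<le> ennreal (real k * truncation \<phi> k y)" if "y \<in> ?J" for y
    proof -
      have "t < y" "y \<le> t + 1 / real k" using that by auto
      then have "0 < y" "y < real k" "y \<le> r"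
        using \<open>0 < t\<close> k(3) \<open>1 / real k < r - t\<close> \<open>1 / real k < 1\<close> by linarith+
      then have "x' \<le> min (\<phi> y) (of_nat k)"
        using x' x0 k(1) antimonoD[OF anti, of y r]
        by (auto simp: ennreal_of_nat_eq_real_of_nat ennreal_less_iff intro: less_imp_le)
      then have "x0 \<le> truncation \<phi> k y"
        using \<open>0 < y\<close> \<open>y < real k\<close> x0 truncation_nonneg[of \<phi> k y]
        by (metis ennreal_le_iff ennreal_truncation)
      then show ?thesis by (intro ennreal_leI mult_left_mono) auto
    qed
    then have "(\<integral>\<^sup>+ y. ennreal (real k * x0) * indicator ?J y \<partial>lborel)
        \<le> (\<integral>\<^sup>+ y\<in>?J. ennreal (real k * truncation \<phi> k y) \<partial>lborel)"
      by (intro nn_integral_mono) (simp add: indicator_def)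
    also have "\<dots> = tail_integral (difference_density \<phi> k) t"
      using anti \<open>0 < k\<close> \<open>0 < t\<close> by (rule tail_integral_difference_density[symmetric])
    finally have "ennreal (real k * x0) * ennreal (1 / real k) \<le> tail_integral (difference_density \<phi> k) t"
      by (simp add: nn_integral_cmult_indicator)
    moreover have "ennreal (real k * x0) * ennreal (1 / real k) = x'"
      using x0 \<open>0 < k\<close> by (simp flip: ennreal_mult)
    ultimately show ?thesis using x'(1) by simp
  qed
  then show ?thesis unfolding eventually_sequentially by blast
qed

section \<open>The two functionals\<close>

definition Lambda_functional :: "(real \<Rightarrow> real) \<Rightarrow> real \<Rightarrow> (real \<Rightarrow> ennreal) \<Rightarrow> ennreal" where
  "Lambda_functional w q \<phi> = epow (\<integral>\<^sup>+ t\<in>{0<..}. ennreal (w t) * epow (\<phi> t) q \<partial>lborel) (1 / q)"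

definition iterated_functional ::
    "(real \<Rightarrow> real) \<Rightarrow> (real \<Rightarrow> real) \<Rightarrow> real \<Rightarrow> real \<Rightarrow> (real \<Rightarrow> ennreal) \<Rightarrow> ennreal" where
  "iterated_functional u v m p \<phi> = epow (\<integral>\<^sup>+ t\<in>{0<..}. ennreal (v t) *
     epow (\<integral>\<^sup>+ s\<in>{t<..}. ennreal (u s) * epow (\<phi> s) m \<partial>lborel) (p / m) \<partial>lborel) (1 / p)"

lemma Lambda_functional_cong:
  "(\<And>t. 0 < t \<Longrightarrow> \<phi> t = \<psi> t) \<Longrightarrow> Lambda_functional w q \<phi> = Lambda_functional w q \<psi>"
  unfolding Lambda_functional_def by (intro arg_cong2[where f = epow] nn_integral_cong refl)
    (simp split: split_indicator)

lemma iterated_functional_cong: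
  assumes "\<And>t. 0 < t \<Longrightarrow> \<phi> t = \<psi> t"
  shows "iterated_functional u v m p \<phi> = iterated_functional u v m p \<psi>"
proof -
  have "(\<integral>\<^sup>+ s\<in>{t<..}. ennreal (u s) * epow (\<phi> s) m \<partial>lborel)
      = (\<integral>\<^sup>+ s\<in>{t<..}. ennreal (u s) * epow (\<psi> s) m \<partial>lborel)" if "0 < t" for t
    using that assms by (intro nn_integral_cong) (simp split: split_indicator)
  then show ?thesis unfolding iterated_functional_def
    by (intro arg_cong2[where f = epow] nn_integral_cong refl) (simp split: split_indicator)
qed

lemma iterated_functional_mono:
  assumes "\<And>t. 0 < t \<Longrightarrow> \<phi> t \<le> \<psi> t" "0 < m" "0 < p"
  shows "iterated_functional u v m p \<phi> \<le> iterated_functional u v m p \<psi>"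
proof -
  have "(\<integral>\<^sup>+ s\<in>{t<..}. ennreal (u s) * epow (\<phi> s) m \<partial>lborel)
      \<le> (\<integral>\<^sup>+ s\<in>{t<..}. ennreal (u s) * epow (\<psi> s) m \<partial>lborel)" if "0 < t" for t
    using that assms by (intro nn_integral_mono) (auto split: split_indicator intro!: mult_left_mono epow_mono)
  then show ?thesis unfolding iterated_functional_def using assms(2,3)
    by (intro epow_mono nn_integral_mono) (auto split: split_indicator intro!: mult_left_mono epow_mono)
qed

lemma borel_measurable_Lambda_integrand:
  assumes "weight w" "antimono \<psi>" "0 < q"
  shows "(\<lambda>t. ennreal (w t) * epow (\<psi> t) q * indicator {0<..} t) \<in> borel_measurable lborel"
proof -
  have "(\<lambda>t. indicator {0<..} t *\<^sub>R w t) \<in> borel_measurable lborel"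
    using assms(1) unfolding weight_def set_borel_measurable_def by simp
  then have "(\<lambda>t. ennreal (indicator {0<..} t *\<^sub>R w t)) \<in> borel_measurable lborel"
    by measurable
  moreover have "antimono (\<lambda>t. epow (\<psi> t) q)"
    using assms(2,3) by (auto simp: antimono_def intro: epow_mono)
  then have "(\<lambda>t. epow (\<psi> t) q) \<in> borel_measurable lborel"
    using borel_measurable_antimono_ennreal by simp
  moreover have "(\<lambda>t. ennreal (w t) * epow (\<psi> t) q * indicator {0<..} t)
      = (\<lambda>t. ennreal (indicator {0<..} t *\<^sub>R w t) * epow (\<psi> t) q)"
    by (auto simp: fun_eq_iff indicator_def)
  ultimately show ?thesis using borel_measurable_times_ennreal by metis
qed

lemma Lambda_functional_le_of_eventually_less:
  assumes w: "weight w" and q: "0 < q"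
    and anti: "\<And>k. antimono (\<psi> k)"
    and approx: "\<And>t x. 0 < t \<Longrightarrow> x < \<phi> t \<Longrightarrow> eventually (\<lambda>k. x < \<psi> k t) sequentially"
    and bound: "\<And>k. Lambda_functional w q (\<psi> k) \<le> R"
  shows "Lambda_functional w q \<phi> \<le> R"
proof -
  define F where "F \<phi> t = ennreal (w t) * epow (\<phi> t) q * indicator {0<..} t" for \<phi> t
  have bounded: "integral\<^sup>N lborel (F (\<psi> k)) \<le> epow R q" for k
    using epow_mono[OF bound q, of k] epow_inverse_epow[OF q]
    unfolding Lambda_functional_def F_def by (simp add: mult.assoc)
  have "F \<phi> t \<le> liminf (\<lambda>k. F (\<psi> k) t)" for t
  proof (cases "0 < t")
    case True
    show ?thesis unfolding le_Liminf_iff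
    proof (intro allI impI)
      fix z assume "z < F \<phi> t"
      then have "z < ennreal (w t) * epow (\<phi> t) q" using True by (simp add: F_def)
      then obtain y where y: "y < \<phi> t" "z < ennreal (w t) * epow y q"
        using mult_epow_approx_from_below q by blast
      show "eventually (\<lambda>k. z < F (\<psi> k) t) sequentially"
        using approx[OF True y(1)]
      proof (rule eventually_mono)
        fix k assume "y < \<psi> k t"
        then have "ennreal (w t) * epow y q \<le> ennreal (w t) * epow (\<psi> k t) q"
          using q by (intro mult_left_mono epow_mono) auto
        then show "z < F (\<psi> k) t" using y(2) True by (simp add: F_def)
      qed
    qed
  qed (simp add: F_def)
  then have "integral\<^sup>N lborel (F \<phi>) \<le> (\<integral>\<^sup>+ t. liminf (\<lambda>k. F (\<psi> k) t) \<partial>lborel)"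
    by (rule nn_integral_mono)
  also have "\<dots> \<le> liminf (\<lambda>k. integral\<^sup>N lborel (F (\<psi> k)))"
    unfolding F_def by (intro nn_integral_liminf borel_measurable_Lambda_integrand w anti q)
  also have "\<dots> \<le> epow R q"
    by (rule order_trans[OF Liminf_le_Limsup Limsup_bounded]) (auto simp: bounded)
  finally have "Lambda_functional w q \<phi> \<le> epow (epow R q) (1 / q)"
    unfolding Lambda_functional_def F_def using q by (intro epow_mono) (simp_all add: mult.assoc)
  then show ?thesis using epow_epow_inverse[OF q] by simp
qed

lemma tail_integral_inequality_of_rearr_inequality:
  assumes rearr_ineq: "\<forall>f :: 'a::euclidean_space \<Rightarrow> real. f \<in> borel_measurable lebesgue \<longrightarrow>
      Lambda_functional w q (rearr f) \<le> ennreal C * iterated_functional u v m p (rearr f)"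
    and "h \<in> Mplus"
  shows "Lambda_functional w q (tail_integral h)
    \<le> ennreal C * iterated_functional u v m p (tail_integral h)"
proof -
  obtain f :: "'a \<Rightarrow> real" where f: "f \<in> borel_measurable lebesgue" "\<forall>t>0. rearr f t = tail_integral h t"
    using right_cont_antimono_is_rearr right_cont_antimono_tail_integral tail_integral_infinite_or_finite
      \<open>h \<in> Mplus\<close> by metis
  have "Lambda_functional w q (tail_integral h) = Lambda_functional w q (rearr f)"
    using f(2) by (intro Lambda_functional_cong) simp
  also have "\<dots> \<le> ennreal C * iterated_functional u v m p (rearr f)"
    using rearr_ineq f(1) by blast
  also have "iterated_functional u v m p (rearr f) = iterated_functional u v m p (tail_integral h)"
    using f(2) by (intro iterated_functional_cong) simp
  finally show ?thesis .
qed

lemma rearr_inequality_of_tail_integral_inequality: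
  assumes tail_ineq: "\<forall>h\<in>Mplus. Lambda_functional w q (tail_integral h)
      \<le> ennreal C * iterated_functional u v m p (tail_integral h)"
    and f: "f \<in> borel_measurable lebesgue"
    and "weight w" "0 < q" "0 < m" "0 < p"
  shows "Lambda_functional w q (rearr f) \<le> ennreal C * iterated_functional u v m p (rearr f)"
proof (rule Lambda_functional_le_of_eventually_less[OF \<open>weight w\<close> \<open>0 < q\<close>])
  let ?\<psi> = "\<lambda>k. tail_integral (difference_density (rearr f) k)"
  show "antimono (?\<psi> k)" for k by (rule antimono_tail_integral)
  show "eventually (\<lambda>k. x < ?\<psi> k t) sequentially" if "0 < t" "x < rearr f t" for t x
    using right_cont_antimono_rearr[OF f] that by (rule eventually_less_tail_integral_difference_density)
  have "Lambda_functional w q (?\<psi> k) \<le> ennreal C * iterated_functional u v m p (?\<psi> k)" for k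
    using tail_ineq difference_density_Mplus[OF antimono_rearr] by blast
  also have "iterated_functional u v m p (?\<psi> k) \<le> iterated_functional u v m p (rearr f)" for k
    using \<open>0 < m\<close> \<open>0 < p\<close>
    by (intro iterated_functional_mono tail_integral_difference_density_le antimono_rearr)
  finally show "Lambda_functional w q (?\<psi> k) \<le> ennreal C * iterated_functional u v m p (rearr f)" for k
    by (simp add: mult_left_mono)
qed

theorem lemma3p9:
  fixes m p q C :: real and u v w :: "real \<Rightarrow> real"
  assumes "0 < m" "0 < p" "0 < q" "0 < C"
    and "weight u" "weight v" "weight w"
    and "admissible u v m p"
  shows "(\<forall>f :: 'a::euclidean_space \<Rightarrow> real. f \<in> borel_measurable lebesgue \<longrightarrow>
            epow (\<integral>\<^sup>+ t\<in>{0<..}. ennreal (w t) * epow (rearr f t) q \<partial>lborel) (1 / q)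
            \<le> ennreal C * epow (\<integral>\<^sup>+ t\<in>{0<..}. ennreal (v t) *
                 epow (\<integral>\<^sup>+ s\<in>{t<..}. ennreal (u s) * epow (rearr f s) m \<partial>lborel) (p / m) \<partial>lborel) (1 / p))
     \<longleftrightarrow>
     (\<forall>h\<in>Mplus.
            epow (\<integral>\<^sup>+ t\<in>{0<..}. ennreal (w t) * epow (\<integral>\<^sup>+ y\<in>{t<..}. ennreal (h y) \<partial>lborel) q \<partial>lborel) (1 / q)
            \<le> ennreal C * epow (\<integral>\<^sup>+ t\<in>{0<..}. ennreal (v t) *
                 epow (\<integral>\<^sup>+ s\<in>{t<..}. ennreal (u s) *
                   epow (\<integral>\<^sup>+ y\<in>{s<..}. ennreal (h y) \<partial>lborel) m \<partial>lborel) (p / m) \<partial>lborel) (1 / p))"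
proof -
  have "(\<forall>f :: 'a \<Rightarrow> real. f \<in> borel_measurable lebesgue \<longrightarrow>
          Lambda_functional w q (rearr f) \<le> ennreal C * iterated_functional u v m p (rearr f))
    \<longleftrightarrow> (\<forall>h\<in>Mplus. Lambda_functional w q (tail_integral h)
          \<le> ennreal C * iterated_functional u v m p (tail_integral h))"
    using tail_integral_inequality_of_rearr_inequality
      rearr_inequality_of_tail_integral_inequality[OF _ _ \<open>weight w\<close> \<open>0 < q\<close> \<open>0 < m\<close> \<open>0 < p\<close>]
    by blast
  then show ?thesis unfolding Lambda_functional_def iterated_functional_def tail_integral_def .
qed

end
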